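(* Let $\Omega\subset\mathbb{R}^2$ be a bounded convex set with non-empty interior which has the same symmetry axes as an equilateral triangle (i.e. it is symmetric with respect to three lines through a common point forming pairwise angles $\pi/3$). Then there exist $a\in[0,1/3]$ and a map $g$ which is a composition of a rigid motion and a homothety such that $g(\Omega)\in\mathcal C_a$.
   Context: Let $T$ be the equilateral triangle with vertices $(\pm1/2,0)$ and $(0,\sqrt3/2)$; its symmetry axes are the lines $x=0$, $-x+\sqrt3 y=1/2$, $x+\sqrt3y=1/2$. For $a\in[0,1/2]$, let $\hat T_a$ be the equilateral triangle bounded by the lines $y=\frac{\sqrt3}{2}(1-a)$ and $y=\pm\sqrt3x-\sqrt3(\frac12-a)$. Let $\Omega_a=\hat T_a\cap T$, the hexagon with vertices $(\pm\frac a2,\frac{\sqrt3}{2}(1-a))$, $(\pm(\frac12-a),0)$, $(\pm\frac12(1-a),\frac{\sqrt3}{2}a)$. Let $H_a$ be the hexagon with vertices $(0,0)$, $(\pm(\frac12-\frac34a),\frac{\sqrt3}{4}a)$, $(\pm\frac14,\frac{\sqrt3}4)$, $(0,\frac{\sqrt3}{2}(1-a))$ (the midpoints of the sides of $\Omega_a$). For $a\in[0,1/2]$, $\mathcal C_a$ is the class of convex sets $\Omega$ symmetric with respect to the three symmetry axes of $T$ and satisfying $H_a\subset\overline\Omega\subset\overline{\Omega_a}$ (sets identified with their closures). *)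

theory Defs
  imports "HOL-Analysis.Analysis"
begin

text \<open>The plane R^2 is identified with the complex numbers: (x,y) = x + i y.\<close>

definition pt :: "real \<Rightarrow> real \<Rightarrow> complex" where
  "pt x y = Complex x y"

text \<open>Reflection across the line {(x,y). al*x + be*y = ga} (with (al,be) \<noteq> (0,0)).\<close>
definition refl_eq :: "real \<Rightarrow> real \<Rightarrow> real \<Rightarrow> complex \<Rightarrow> complex" where
  "refl_eq al be ga z =
     z - of_real (2 * (al * Re z + be * Im z - ga) / (al\<^sup>2 + be\<^sup>2)) * Complex al be"

text \<open>Reflection across the line through p with direction angle th.\<close>
definition refl_dir :: "complex \<Rightarrow> real \<Rightarrow> complex \<Rightarrow> complex" where
  "refl_dir p th z = p + cis (2 * th) * cnj (z - p)"

definition symmetric_wrt :: "(complex \<Rightarrow> complex) \<Rightarrow> complex set \<Rightarrow> bool" where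
  "symmetric_wrt f S \<longleftrightarrow> f ` S = S"

definition triangle_symmetric :: "complex set \<Rightarrow> bool" where
  "triangle_symmetric S \<longleftrightarrow>
     (\<exists>p th. symmetric_wrt (refl_dir p th) S \<and>
             symmetric_wrt (refl_dir p (th + pi/3)) S \<and>
             symmetric_wrt (refl_dir p (th + 2*pi/3)) S)"

definition T_symmetric :: "complex set \<Rightarrow> bool" where
  "T_symmetric S \<longleftrightarrow>
     symmetric_wrt (refl_eq 1 0 0) S \<and>
     symmetric_wrt (refl_eq (-1) (sqrt 3) (1/2)) S \<and>
     symmetric_wrt (refl_eq 1 (sqrt 3) (1/2)) S"

text \<open>Closed hexagon Omega_a = T_hat_a \<inter> T (closure), as the convex hull of its vertices.\<close>
definition Omega_hex :: "real \<Rightarrow> complex set" where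
  "Omega_hex a = convex hull
     {pt (a/2) (sqrt 3 / 2 * (1 - a)), pt (-(a/2)) (sqrt 3 / 2 * (1 - a)),
      pt (1/2 - a) 0, pt (-(1/2 - a)) 0,
      pt ((1 - a)/2) (sqrt 3 / 2 * a), pt (-((1 - a)/2)) (sqrt 3 / 2 * a)}"

definition H_hex :: "real \<Rightarrow> complex set" where
  "H_hex a = convex hull
     {pt 0 0, pt (1/2 - 3/4 * a) (sqrt 3 / 4 * a), pt (-(1/2 - 3/4 * a)) (sqrt 3 / 4 * a),
      pt (1/4) (sqrt 3 / 4), pt (-(1/4)) (sqrt 3 / 4), pt 0 (sqrt 3 / 2 * (1 - a))}"

definition class_C :: "real \<Rightarrow> complex set set" where
  "class_C a = {S. convex S \<and> T_symmetric S \<and> H_hex a \<subseteq> closure S \<and> closure S \<subseteq> Omega_hex a}"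

definition rigid_motion :: "(complex \<Rightarrow> complex) \<Rightarrow> bool" where
  "rigid_motion f \<longleftrightarrow> (\<forall>x y. dist (f x) (f y) = dist x y)"

definition homothety :: "(complex \<Rightarrow> complex) \<Rightarrow> bool" where
  "homothety h \<longleftrightarrow> (\<exists>c (lam::real). lam \<noteq> 0 \<and> (\<forall>z. h z = c + of_real lam * (z - c)))"

end

(*
  A rigid motion moves the three symmetry axes onto those of T, which meet at its centroid.
  Let phi be the affine function that vanishes at the centroid and whose level lines are
  parallel to the base of T. Its two copies rotated by 2pi/3 are phi composed with the
  reflections R2 and R3, and the three sum to zero; hence on a symmetric set the support
  numbers sup phi and sup (-phi) differ by at most a factor 2. A homothety about the
  centroid (with ratio of either sign) makes the smaller one 1/6 and the larger one
  r in [1/6, 1/3]. The six support lines then cut out Omega_a with a = 2/3 - 2r, and the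
  contact points, moved to the vertical axis by convexity and reflected, span H_a.
*)

theory Submission
  imports Defs
begin

abbreviation "R1 \<equiv> refl_eq 1 0 0"
abbreviation "R2 \<equiv> refl_eq (-1) (sqrt 3) (1/2)"
abbreviation "R3 \<equiv> refl_eq 1 (sqrt 3) (1/2)"

lemma sqrt3_mult_sqrt3 [simp]: "sqrt 3 * (sqrt 3 * x) = (3::real) * x"
  by (simp add: mult.assoc [symmetric])

lemma R1_Re [simp]: "Re (R1 z) = - Re z" and R1_Im [simp]: "Im (R1 z) = Im z"
  by (simp_all add: refl_eq_def)

lemma R2_Re [simp]: "Re (R2 z) = Re z / 2 + sqrt 3 * Im z / 2 - 1/4"
  and R2_Im [simp]: "Im (R2 z) = - Im z / 2 + sqrt 3 * Re z / 2 + sqrt 3 / 4"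
  by (simp_all add: refl_eq_def field_simps)

lemma R3_Re [simp]: "Re (R3 z) = Re z / 2 - sqrt 3 * Im z / 2 + 1/4"
  and R3_Im [simp]: "Im (R3 z) = - Im z / 2 - sqrt 3 * Re z / 2 + sqrt 3 / 4"
  by (simp_all add: refl_eq_def field_simps)

lemma refl_eq_involution:
  assumes "al\<^sup>2 + be\<^sup>2 \<noteq> 0"
  shows "refl_eq al be ga (refl_eq al be ga z) = z"
proof -
  define L where "L w = al * Re w + be * Im w - ga" for w
  define c where "c = 2 * L z / (al\<^sup>2 + be\<^sup>2)"
  have f: "refl_eq al be ga w = w - of_real (2 * L w / (al\<^sup>2 + be\<^sup>2)) * Complex al be" for w
    by (simp add: refl_eq_def L_def)
  have "L (refl_eq al be ga z) = L z - c * (al\<^sup>2 + be\<^sup>2)"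
    unfolding f c_def [symmetric] by (simp add: L_def algebra_simps power2_eq_square)
  also have "\<dots> = - L z"
    using assms by (simp add: c_def)
  finally show ?thesis
    by (simp add: f [of "refl_eq al be ga z"]) (simp add: f c_def)
qed

lemma continuous_on_refl_eq: "al\<^sup>2 + be\<^sup>2 \<noteq> 0 \<Longrightarrow> continuous_on A (refl_eq al be ga)"
  unfolding refl_eq_def by (intro continuous_intros) auto

lemma image_affine_mult_eq:
  "(\<lambda>z::'a::real_normed_field. c + e * (z - p)) ` S = (+) (c - e * p) ` ((*) e ` S)"
  unfolding image_image by (rule image_cong) (simp_all add: algebra_simps)

lemma convex_affine_mult_image:
  "convex S \<Longrightarrow> convex ((\<lambda>z::'a::real_normed_field. c + e * (z - p)) ` S)"
  unfolding image_affine_mult_eq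
  by (intro convex_translation convex_linear_image bounded_linear.linear bounded_linear_mult_right)

lemma bounded_affine_mult_image:
  "bounded S \<Longrightarrow> bounded ((\<lambda>z::'a::real_normed_field. c + e * (z - p)) ` S)"
  unfolding image_affine_mult_eq
  by (intro bounded_translation bounded_linear_image bounded_linear_mult_right)

lemma T_symmetricD:
  assumes "T_symmetric K" "z \<in> K"
  shows "R1 z \<in> K" "R2 z \<in> K" "R3 z \<in> K"
  using assms unfolding T_symmetric_def symmetric_wrt_def by blast+

lemma symmetric_wrt_closure:
  assumes "continuous_on UNIV f" "\<And>z. f (f z) = z" "symmetric_wrt f S"
  shows "symmetric_wrt f (closure S)"
proof -
  have sub: "f ` closure S \<subseteq> closure S"
    using image_closure_subset [OF continuous_on_subset [OF assms(1)] closed_closure] assms(3)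
      closure_subset
    unfolding symmetric_wrt_def by blast
  then have "closure S \<subseteq> f ` closure S"
    using assms(2) by (metis image_eqI subsetI image_subset_iff)
  with sub show ?thesis unfolding symmetric_wrt_def by blast
qed

lemma T_symmetric_closure: "T_symmetric S \<Longrightarrow> T_symmetric (closure S)"
  unfolding T_symmetric_def
  by (intro conjI symmetric_wrt_closure continuous_on_refl_eq refl_eq_involution; simp)

definition centroid :: complex where
  "centroid = Complex 0 (sqrt 3 / 6)"

text \<open>The sides of \<open>Omega_hex a\<close> lie on the lines \<open>phi = 1/6\<close> and \<open>-phi = 1/3 - a/2\<close>
  and their images under \<open>R2\<close> and \<open>R3\<close>.\<close>
definition phi :: "complex \<Rightarrow> real" where
  "phi z = 1/6 - Im z / sqrt 3"

definition dilate :: "real \<Rightarrow> complex \<Rightarrow> complex" where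
  "dilate m z = centroid + of_real m * (z - centroid)"

lemma phi_R2: "phi (R2 z) = (Im z / sqrt 3 - Re z) / 2 - 1/12"
  and phi_R3: "phi (R3 z) = (Re z + Im z / sqrt 3) / 2 - 1/12"
  by (simp_all add: phi_def field_simps)

lemma phi_sum_reflections: "phi z + phi (R2 z) + phi (R3 z) = 0"
  by (simp add: phi_R2 phi_R3 phi_def field_simps)

lemma phi_dilate: "phi (dilate m z) = m * phi z"
  by (simp add: phi_def dilate_def centroid_def field_simps)

lemma phi_eq_0_imp_centroid:
  assumes "phi z = 0" "phi (R2 z) = 0" "phi (R3 z) = 0"
  shows "z = centroid"
proof -
  have "Re z = phi (R3 z) - phi (R2 z)"
    by (simp add: phi_R2 phi_R3 field_simps)
  moreover have "Im z = sqrt 3 * (1/6 - phi z)"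
    by (simp add: phi_def)
  ultimately show ?thesis
    using assms by (simp add: centroid_def complex_eq_iff)
qed

lemma R1_dilate: "R1 (dilate m z) = dilate m (R1 z)"
  and R2_dilate: "R2 (dilate m z) = dilate m (R2 z)"
  and R3_dilate: "R3 (dilate m z) = dilate m (R3 z)"
  by (simp_all add: complex_eq_iff dilate_def centroid_def field_simps)

lemma T_symmetric_dilate: "T_symmetric S \<Longrightarrow> T_symmetric (dilate m ` S)"
  unfolding T_symmetric_def symmetric_wrt_def image_image
  by (simp add: R1_dilate R2_dilate R3_dilate flip: image_image)

lemma dilate_eq_affinity: "dilate m = (\<lambda>z. (centroid - of_real m * centroid) + m *\<^sub>R z)"
  by (auto simp: dilate_def scaleR_conv_of_real algebra_simps)

lemma convex_dilate: "convex S \<Longrightarrow> convex (dilate m ` S)"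
  unfolding dilate_eq_affinity by (rule convex_affinity)

lemma closure_dilate: "closure (dilate m ` S) = dilate m ` closure S"
proof -
  have "dilate m ` X = (+) (centroid - of_real m * centroid) ` ((*\<^sub>R) m ` X)" for X
    by (simp add: dilate_eq_affinity image_image)
  then show ?thesis
    by (simp add: closure_translation closure_scaleR)
qed

lemma refl_dir_centroid:
  "refl_dir centroid (pi/2) = R1" "refl_dir centroid (pi/6) = R2" "refl_dir centroid (5*pi/6) = R3"
proof -
  have "cis (2 * (pi/2)) = -1"
    by (simp add: complex_eq_iff)
  then show "refl_dir centroid (pi/2) = R1"
    by (intro ext) (simp only: refl_dir_def, simp add: centroid_def complex_eq_iff)
  have "cis (2 * (pi/6)) = Complex (1/2) (sqrt 3 / 2)"
    by (simp add: complex_eq_iff cos_60 sin_60)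
  then show "refl_dir centroid (pi/6) = R2"
    by (intro ext) (simp only: refl_dir_def, simp add: centroid_def complex_eq_iff field_simps)
  have "2 * (5*pi/6) = - (pi/3) + 2*pi"
    by simp
  then have "cis (2 * (5*pi/6)) = cis (- (pi/3)) * cis (2*pi)"
    by (simp only: cis_mult)
  also have "\<dots> = Complex (1/2) (- sqrt 3 / 2)"
    by (simp add: complex_eq_iff cos_60 sin_60)
  finally show "refl_dir centroid (5*pi/6) = R3"
    by (intro ext) (simp only: refl_dir_def, simp add: centroid_def complex_eq_iff field_simps)
qed

lemma refl_dir_rotate:
  "refl_dir q (t + s) (q + cis s * (z - p)) = q + cis s * (refl_dir p t z - p)"
proof -
  have "cis (2 * (t + s)) * cnj (cis s) = cis s * cis (2 * t)"
    by (simp add: cis_cnj cis_mult algebra_simps)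
  then show ?thesis
    unfolding refl_dir_def by (simp add: algebra_simps)
qed

lemma T_symmetric_rotation:
  assumes "symmetric_wrt (refl_dir p th) S" "symmetric_wrt (refl_dir p (th + pi/3)) S"
    and "symmetric_wrt (refl_dir p (th + 2*pi/3)) S"
  shows "T_symmetric ((\<lambda>z. centroid + cis (pi/6 - th) * (z - p)) ` S)"
proof -
  define rot where "rot z = centroid + cis (pi/6 - th) * (z - p)" for z
  have conj: "refl_dir centroid (t + (pi/6 - th)) \<circ> rot = rot \<circ> refl_dir p t" for t
    by (rule ext) (simp add: rot_def refl_dir_rotate)
  have "th + (pi/6 - th) = pi/6" "th + pi/3 + (pi/6 - th) = pi/2" "th + 2*pi/3 + (pi/6 - th) = 5*pi/6"
    by simp_all
  then have "R2 \<circ> rot = rot \<circ> refl_dir p th" "R1 \<circ> rot = rot \<circ> refl_dir p (th + pi/3)"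
    "R3 \<circ> rot = rot \<circ> refl_dir p (th + 2*pi/3)"
    using conj [of th] conj [of "th + pi/3"] conj [of "th + 2*pi/3"] by (simp_all add: refl_dir_centroid)
  moreover have "f ` rot ` S = rot ` S" if "f \<circ> rot = rot \<circ> g" "g ` S = S" for f g
    using that by (metis image_comp)
  ultimately show ?thesis
    using assms unfolding T_symmetric_def symmetric_wrt_def rot_def [abs_def, symmetric] by blast
qed

lemma pt_convex_combination:
  "(1 - t) *\<^sub>R pt x1 y1 + t *\<^sub>R pt x2 y2 = pt ((1 - t) * x1 + t * x2) ((1 - t) * y1 + t * y2)"
  by (simp add: pt_def complex_eq_iff)

lemma convex_Omega_hex: "convex (Omega_hex a)"
  unfolding Omega_hex_def by (rule convex_convex_hull)

lemma Omega_hex_vertices: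
  assumes "s = 1 \<or> s = -1"
  shows "pt (s * (1/2 - a)) 0 \<in> Omega_hex a"
    and "pt (s * ((1 - a)/2)) (sqrt 3 / 2 * a) \<in> Omega_hex a"
    and "pt (s * (a/2)) (sqrt 3 / 2 * (1 - a)) \<in> Omega_hex a"
  using assms unfolding Omega_hex_def by (auto simp: pt_def field_simps intro!: hull_inc)

lemma Omega_hex_segment:
  assumes "pt x1 y1 \<in> Omega_hex a" "pt x2 y2 \<in> Omega_hex a" "0 \<le> t" "t \<le> 1"
    and "(1 - t) * x1 + t * x2 = x" "(1 - t) * y1 + t * y2 = y"
  shows "pt x y \<in> Omega_hex a"
  using convexD [OF convex_Omega_hex assms(1,2), of "1 - t" t] assms(3-6)
  by (simp add: pt_convex_combination)

text \<open>\<open>min (1/2 - a + Y) (1/2 - Y)\<close> is the half-width of \<open>Omega_hex a\<close> at height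
  \<open>sqrt 3 * Y\<close>; the two terms belong to the lower and the upper pair of slanted sides.\<close>
lemma Omega_hex_chord_end:
  assumes "0 \<le> a" "a \<le> 1/2" "0 \<le> Y" "Y \<le> (1 - a)/2" "s = 1 \<or> s = -1"
  shows "pt (s * min (1/2 - a + Y) (1/2 - Y)) (sqrt 3 * Y) \<in> Omega_hex a"
proof (cases "2 * Y \<le> a")
  case True
  define t where "t = (if a = 0 then 0 else 2 * Y / a)"
  have t: "0 \<le> t" "t \<le> 1" "Y = t * a / 2"
    using True assms(1,3) by (auto simp: t_def field_simps)
  have w: "min (1/2 - a + Y) (1/2 - Y) = 1/2 - a + Y"
    using True by simp
  show ?thesis
    unfolding w by (rule Omega_hex_segment [OF Omega_hex_vertices(1,2) [OF assms(5)] t(1,2)])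
      (simp_all add: t(3) field_simps)
next
  case False
  define t where "t = (2 * Y - a) / (1 - 2 * a)"
  have t: "0 \<le> t" "t \<le> 1" "Y = (a + t * (1 - 2 * a)) / 2"
    using False assms(4) by (auto simp: t_def field_simps)
  have w: "min (1/2 - a + Y) (1/2 - Y) = 1/2 - Y"
    using False by simp
  show ?thesis
    unfolding w by (rule Omega_hex_segment [OF Omega_hex_vertices(2,3) [OF assms(5)] t(1,2)])
      (simp_all add: t(3) field_simps)
qed

lemma in_Omega_hex:
  assumes "0 \<le> a" "a \<le> 1/2" "0 \<le> Y" "Y \<le> (1 - a)/2"
    and "\<bar>x\<bar> \<le> min (1/2 - a + Y) (1/2 - Y)"
  shows "pt x (sqrt 3 * Y) \<in> Omega_hex a"
proof -
  define w where "w = min (1/2 - a + Y) (1/2 - Y)"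
  define t where "t = (if w = 0 then 1 else (x + w) / (2 * w))"
  have "\<bar>x\<bar> \<le> w"
    using assms(5) by (simp add: w_def)
  then have t: "0 \<le> t" "t \<le> 1" "(1 - t) * (- w) + t * w = x"
    by (auto simp: t_def field_simps)
  have "pt (-1 * w) (sqrt 3 * Y) \<in> Omega_hex a" "pt (1 * w) (sqrt 3 * Y) \<in> Omega_hex a"
    using Omega_hex_chord_end [OF assms(1-4)] unfolding w_def by blast+
  then show ?thesis
    by (rule Omega_hex_segment [OF _ _ t(1,2)]) (use t(3) in \<open>simp_all add: algebra_simps\<close>)
qed

lemma axis_point_mem:
  assumes "convex K" "T_symmetric K" "z \<in> K"
  shows "pt 0 (Im z) \<in> K"
proof -
  have "(1/2) *\<^sub>R z + (1/2) *\<^sub>R R1 z \<in> K"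
    using convexD [OF assms(1) assms(3) T_symmetricD(1) [OF assms(2,3)]] by simp
  moreover have "(1/2) *\<^sub>R z + (1/2::real) *\<^sub>R R1 z = pt 0 (Im z)"
    by (simp add: pt_def complex_eq_iff)
  ultimately show ?thesis
    by simp
qed

lemma H_hex_subset:
  assumes "convex K" "T_symmetric K"
    and "z1 \<in> K" "Im z1 = 0" "z2 \<in> K" "Im z2 = sqrt 3 / 2 * (1 - a)"
  shows "H_hex a \<subseteq> K"
proof -
  have bottom: "pt 0 0 \<in> K" and top: "pt 0 (sqrt 3 / 2 * (1 - a)) \<in> K"
    using axis_point_mem [OF assms(1,2)] assms(3-6) by metis+
  have "R3 (pt 0 0) = pt (1/4) (sqrt 3 / 4)" "R2 (pt 0 0) = pt (-(1/4)) (sqrt 3 / 4)"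
    "R2 (pt 0 (sqrt 3 / 2 * (1 - a))) = pt (1/2 - 3/4 * a) (sqrt 3 / 4 * a)"
    "R3 (pt 0 (sqrt 3 / 2 * (1 - a))) = pt (-(1/2 - 3/4 * a)) (sqrt 3 / 4 * a)"
    by (simp_all add: complex_eq_iff pt_def field_simps)
  then have "pt (1/4) (sqrt 3 / 4) \<in> K" "pt (-(1/4)) (sqrt 3 / 4) \<in> K"
    "pt (1/2 - 3/4 * a) (sqrt 3 / 4 * a) \<in> K" "pt (-(1/2 - 3/4 * a)) (sqrt 3 / 4 * a) \<in> K"
    using T_symmetricD [OF assms(2) bottom] T_symmetricD [OF assms(2) top] by metis+
  with bottom top show ?thesis
    unfolding H_hex_def by (intro hull_minimal) (use assms(1) in auto)
qed

lemma subset_Omega_hex: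
  assumes "T_symmetric K" "0 \<le> a" "a \<le> 1/2"
    and "\<forall>z\<in>K. phi z \<le> 1/6 \<and> - phi z \<le> 1/3 - a/2"
  shows "K \<subseteq> Omega_hex a"
proof
  fix z assume "z \<in> K"
  define x where "x = Re z"
  define Y where "Y = Im z / sqrt 3"
  have "phi z = 1/6 - Y"
    by (simp add: phi_def Y_def)
  moreover have "phi (R2 z) = (Y - x) / 2 - 1/12" "phi (R3 z) = (x + Y) / 2 - 1/12"
    by (simp_all add: phi_R2 phi_R3 x_def Y_def)
  moreover have "\<forall>w\<in>{z, R2 z, R3 z}. phi w \<le> 1/6 \<and> - phi w \<le> 1/3 - a/2"
    using assms(4) \<open>z \<in> K\<close> T_symmetricD [OF assms(1) \<open>z \<in> K\<close>] by auto
  ultimately have "0 \<le> Y" "Y \<le> (1 - a)/2" "\<bar>x\<bar> \<le> min (1/2 - a + Y) (1/2 - Y)"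
    by (auto simp: abs_le_iff field_simps)
  then have "pt x (sqrt 3 * Y) \<in> Omega_hex a"
    using assms(2,3) by (rule_tac in_Omega_hex) auto
  moreover have "pt x (sqrt 3 * Y) = z"
    by (simp add: pt_def complex_eq_iff x_def Y_def)
  ultimately show "z \<in> Omega_hex a"
    by simp
qed

lemma class_C_criterion:
  assumes "convex S" "T_symmetric S" "0 \<le> a" "a \<le> 1/2"
    and "\<forall>z\<in>closure S. phi z \<le> 1/6 \<and> - phi z \<le> 1/3 - a/2"
    and "z1 \<in> closure S" "phi z1 = 1/6" "z2 \<in> closure S" "- phi z2 = 1/3 - a/2"
  shows "S \<in> class_C a"
proof -
  have "Im z1 = 0" "Im z2 = sqrt 3 / 2 * (1 - a)"
    using assms(7,9) by (simp_all add: phi_def field_simps)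
  then have "H_hex a \<subseteq> closure S"
    using assms(1,2,6,8) by (intro H_hex_subset convex_closure T_symmetric_closure)
  moreover have "closure S \<subseteq> Omega_hex a"
    using assms(2-5) by (intro subset_Omega_hex T_symmetric_closure)
  ultimately show ?thesis
    using assms(1,2) by (simp add: class_C_def)
qed

lemma phi_support_pos:
  assumes "T_symmetric K" "z \<in> K" "z \<noteq> centroid" "s \<noteq> 0"
    and "\<forall>w\<in>K. s * phi w \<le> A"
  shows "0 < A"
proof (rule ccontr)
  assume "\<not> 0 < A"
  then have "s * phi z \<le> 0" "s * phi (R2 z) \<le> 0" "s * phi (R3 z) \<le> 0"
    using assms(2,5) T_symmetricD [OF assms(1,2)] by force+
  moreover have "s * phi z + s * phi (R2 z) + s * phi (R3 z) = 0"
    using phi_sum_reflections [of z] by (metis distrib_left mult_zero_right)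
  ultimately have "s * phi z = 0" "s * phi (R2 z) = 0" "s * phi (R3 z) = 0"
    by linarith+
  with assms(3,4) phi_eq_0_imp_centroid show False
    by simp
qed

lemma phi_support_opposite:
  assumes "T_symmetric K" "z \<in> K" "\<forall>w\<in>K. s * phi w \<le> A"
  shows "- (s * phi z) \<le> 2 * A"
proof -
  have "s * phi (R2 z) \<le> A" "s * phi (R3 z) \<le> A"
    using assms(3) T_symmetricD [OF assms(1,2)] by blast+
  moreover have "s * phi z + s * phi (R2 z) + s * phi (R3 z) = 0"
    using phi_sum_reflections [of z] by (metis distrib_left mult_zero_right)
  ultimately show ?thesis
    by linarith
qed

lemma T_symmetric_extreme_points:
  assumes "compact K" "T_symmetric K" "z \<in> K" "z \<noteq> centroid"
  obtains s P N where "s = 1 \<or> s = -1" "P \<in> K" "N \<in> K"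
    "\<forall>w\<in>K. s * phi w \<le> s * phi P \<and> - (s * phi w) \<le> - (s * phi N)"
    "0 < s * phi P" "s * phi P \<le> - (s * phi N)" "- (s * phi N) \<le> 2 * (s * phi P)"
proof -
  have K: "K \<noteq> {}" "continuous_on K phi" "continuous_on K (\<lambda>w. - phi w)"
    using assms(3) unfolding phi_def by (auto intro!: continuous_intros)
  obtain p1 where p1: "p1 \<in> K" "\<forall>w\<in>K. phi w \<le> phi p1"
    using continuous_attains_sup [OF assms(1) K(1,2)] by blast
  obtain p2 where p2: "p2 \<in> K" "\<forall>w\<in>K. - phi w \<le> - phi p2"
    using continuous_attains_sup [OF assms(1) K(1,3)] by blast
  obtain s P N where sPN: "s = 1 \<or> s = -1" "P \<in> K" "N \<in> K"
    "\<forall>w\<in>K. s * phi w \<le> s * phi P \<and> - (s * phi w) \<le> - (s * phi N)"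
    "s * phi P \<le> - (s * phi N)"
  proof (cases "phi p1 \<le> - phi p2")
    case True
    then show ?thesis
      using that [of 1 p1 p2] p1 p2 by simp
  next
    case False
    then show ?thesis
      using that [of "-1" p2 p1] p1 p2 by simp
  qed
  moreover have "0 < s * phi P"
    using phi_support_pos [OF assms(2-4), of s "s * phi P"] sPN(1,4) by auto
  moreover have "- (s * phi N) \<le> 2 * (s * phi P)"
    using phi_support_opposite [OF assms(2) sPN(3)] sPN(4) by blast
  ultimately show ?thesis
    using that by blast
qed

lemma dilate_into_class_C:
  assumes "convex S" "bounded S" "T_symmetric S" "z \<in> S" "z \<noteq> centroid"
  shows "\<exists>m a. m \<noteq> 0 \<and> 0 \<le> a \<and> a \<le> 1/3 \<and> dilate m ` S \<in> class_C a"
proof -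
  let ?K = "closure S"
  have K: "compact ?K" "T_symmetric ?K" "z \<in> ?K"
    using assms(2-4) closure_subset by (auto simp: compact_closure intro: T_symmetric_closure)
  obtain s P N where sPN: "s = 1 \<or> s = -1" "P \<in> ?K" "N \<in> ?K"
    "\<forall>w\<in>?K. s * phi w \<le> s * phi P \<and> - (s * phi w) \<le> - (s * phi N)"
    "0 < s * phi P" "s * phi P \<le> - (s * phi N)" "- (s * phi N) \<le> 2 * (s * phi P)"
    by (rule T_symmetric_extreme_points [OF K assms(5)])
  define A where "A = s * phi P"
  define B where "B = - (s * phi N)"
  define m where "m = s / (6 * A)"
  define r where "r = B / (6 * A)"
  define a where "a = 2/3 - 2 * r"
  have A: "0 < A"
    using sPN(5) by (simp add: A_def)
  have "A / (6 * A) \<le> B / (6 * A)" "B / (6 * A) \<le> (2 * A) / (6 * A)"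
    using sPN(6,7) A by (simp_all only: A_def B_def divide_right_mono)
  moreover have "A / (6 * A) = 1/6" "(2 * A) / (6 * A) = 1/3"
    using A by simp_all
  ultimately have "1/6 \<le> r" "r \<le> 1/3"
    by (simp_all add: r_def)
  then have a: "0 \<le> a" "a \<le> 1/3" "1/3 - a/2 = r"
    unfolding a_def by (linarith, linarith, simp add: field_simps)
  have phi_m: "phi (dilate m w) = s * phi w / (6 * A)" for w
    by (simp add: phi_dilate m_def)
  have "dilate m ` S \<in> class_C a"
  proof (rule class_C_criterion)
    show "\<forall>z\<in>closure (dilate m ` S). phi z \<le> 1/6 \<and> - phi z \<le> 1/3 - a/2"
    proof
      fix z assume "z \<in> closure (dilate m ` S)"
      then obtain w where w: "w \<in> ?K" "z = dilate m w"
        by (auto simp: closure_dilate)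
      have "s * phi w \<le> A" "- (s * phi w) \<le> B"
        using sPN(4) w(1) by (auto simp: A_def B_def)
      then have "s * phi w / (6 * A) \<le> A / (6 * A)" "- (s * phi w) / (6 * A) \<le> B / (6 * A)"
        using A by (simp_all only: divide_right_mono)
      then show "phi z \<le> 1/6 \<and> - phi z \<le> 1/3 - a/2"
        using A by (simp add: w(2) phi_m a(3) r_def)
    qed
    have "s * phi P = A" "s * phi N = - B"
      by (simp_all add: A_def B_def)
    then show "phi (dilate m P) = 1/6" "- phi (dilate m N) = 1/3 - a/2"
      using A by (simp_all add: phi_m a(3) r_def)
    show "dilate m P \<in> closure (dilate m ` S)" "dilate m N \<in> closure (dilate m ` S)"
      using sPN(2,3) by (simp_all add: closure_dilate)
  qed (use assms a in \<open>simp_all add: convex_dilate T_symmetric_dilate\<close>)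
  moreover have "m \<noteq> 0"
    using sPN(1) A by (auto simp: m_def)
  ultimately show ?thesis
    using a(1,2) by blast
qed

theorem mainTheorem14:
  fixes \<Omega> :: "complex set"
  assumes "bounded \<Omega>" and "convex \<Omega>" and "interior \<Omega> \<noteq> {}"
    and "triangle_symmetric \<Omega>"
  shows "\<exists>a \<rho> h. 0 \<le> a \<and> a \<le> 1/3 \<and> rigid_motion \<rho> \<and> homothety h \<and>
           (\<rho> \<circ> h) ` \<Omega> \<in> class_C a"
proof -
  obtain p th where sym: "symmetric_wrt (refl_dir p th) \<Omega>"
    "symmetric_wrt (refl_dir p (th + pi/3)) \<Omega>" "symmetric_wrt (refl_dir p (th + 2*pi/3)) \<Omega>"
    using assms(4) unfolding triangle_symmetric_def by blast
  define \<rho> where "\<rho> = (\<lambda>z. centroid + cis (pi/6 - th) * (z - p))"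
  obtain z where "z \<in> \<Omega>" "z \<noteq> p"
    using assms(3) interior_mono [of \<Omega> "{p}"] by auto
  then have "\<rho> z \<in> \<rho> ` \<Omega>" "\<rho> z \<noteq> centroid"
    by (simp_all add: \<rho>_def)
  then obtain m a where m: "m \<noteq> 0" "0 \<le> a" "a \<le> 1/3" "dilate m ` \<rho> ` \<Omega> \<in> class_C a"
    using dilate_into_class_C [of "\<rho> ` \<Omega>"] T_symmetric_rotation [OF sym] assms(1,2)
    unfolding \<rho>_def by (metis convex_affine_mult_image bounded_affine_mult_image)
  define h where "h = (\<lambda>z. p + of_real m * (z - p))"
  have "homothety h"
    using m(1) unfolding homothety_def h_def by blast
  moreover have "rigid_motion \<rho>"
    by (simp add: rigid_motion_def \<rho>_def dist_norm norm_mult flip: right_diff_distrib)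
  moreover have "(\<rho> \<circ> h) ` \<Omega> = dilate m ` \<rho> ` \<Omega>"
    unfolding image_comp by (rule image_cong) (simp_all add: \<rho>_def h_def dilate_def algebra_simps)
  ultimately show ?thesis
    using m(2-4) by (intro exI [of _ a] exI [of _ \<rho>] exI [of _ h]) simp
qed

end
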